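(* Let $A$ be a formula of $\mathbf{L_1}$. If some normal tableau for $A$ is closed, then no normal tableau for $A$ has a branch ending with a Hintikka formula; in particular every completed normal tableau for $A$ is closed.
   Context: Formulas of $\mathbf{L_1}$: built from atomic formulas $\epsilon ab$ ($a,b$ name variables, possibly equal) with connectives $\vee,\sim$. Disjunctions may be associated in any way. Positive/negative parts (occurrences): $A$ is a positive part of $A$; if $B\vee C$ is a positive part then $B,C$ are positive parts; if $\sim B$ is a positive part then $B$ is a negative part; if $\sim B$ is a negative part then $B$ is a positive part. $F[B_+]$ ($G[B_-]$) denotes a formula with a specified occurrence of $B$ as positive (negative) part; $F[B_+,C_-]$ etc. denote specified non-overlapping occurrences. Tableaux: reduction rules ($\vee_-$) $G[B\vee C_-]$ $\mapsto$ two branches $G[B\vee C_-]\vee\sim B$, $G[B\vee C_-]\vee\sim C$; ($\epsilon_1$) $G[\epsilon ab_-]\mapsto G[\epsilon ab_-]\vee\sim\epsilon aa$; ($\epsilon_2$) $G[\epsilon ab_-,\epsilon bc_-]\mapsto G[\epsilon ab_-,\epsilon bc_-]\vee\sim\epsilon ac$; ($\epsilon_{3b}$) $G[\epsilon ab_-,\epsilon bb_-]\mapsto G[\epsilon ab_-,\epsilon bb_-]\vee\sim\epsilon ba$. A tableau for $A$ is a finite tree with root $A$ whose non-leaf nodes have as children the result of applying one rule. A branch is closed if its last formula has the form $F[B_+,B_-]$; a tableau is closed if all branches are. A tableau is normal if each rule application is made only to a formula not of the form $F[B_+,B_-]$ and only when the formula appended after $\sim$ (i.e. $B$, $C$, $\epsilon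 aa$, $\epsilon ac$ or $\epsilon ba$ respectively) does not already occur as a negative part of the formula being reduced. A normal tableau is completed if no further normal rule application is possible at the end of any branch. Hintikka formula: a formula $H$ such that (1) $H$ is not of the form $F[B_+,B_-]$; (2) if $B\vee C$ is a negative part of $H$ then $B$ or $C$ is; (3) if $\epsilon ab$ is a negative part then so is $\epsilon aa$; (4) if $\epsilon ab,\epsilon bc$ are negative parts then so is $\epsilon ac$; (5) if $\epsilon ab,\epsilon bb$ are negative parts then so is $\epsilon ba$. *)

theory Defs
  imports Main
begin

datatype 'a fm = Eps 'a 'a | Or "'a fm" "'a fm" | Neg "'a fm"

text \<open>Occurrences: occ A p pol B means B occurs in A at position p (a path of
  child indices: 0/1 = left/right disjunct, 2 = under negation) as a positive
  part (pol = True) or a negative part (pol = False), exactly per the clauses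
  of the paper (negative disjunctions are not decomposed).\<close>
inductive occ :: "'a fm \<Rightarrow> nat list \<Rightarrow> bool \<Rightarrow> 'a fm \<Rightarrow> bool" for A where
  top: "occ A [] True A"
| disjL: "occ A p True (Or B C) \<Longrightarrow> occ A (p @ [0]) True B"
| disjR: "occ A p True (Or B C) \<Longrightarrow> occ A (p @ [1]) True C"
| negP: "occ A p True (Neg B) \<Longrightarrow> occ A (p @ [2]) False B"
| negN: "occ A p False (Neg B) \<Longrightarrow> occ A (p @ [2]) True B"

definition pos_part :: "'a fm \<Rightarrow> 'a fm \<Rightarrow> bool" where
  "pos_part A B \<longleftrightarrow> (\<exists>p. occ A p True B)"

definition neg_part :: "'a fm \<Rightarrow> 'a fm \<Rightarrow> bool" where
  "neg_part A B \<longleftrightarrow> (\<exists>p. occ A p False B)"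

definition nonoverlap :: "nat list \<Rightarrow> nat list \<Rightarrow> bool" where
  "nonoverlap p q \<longleftrightarrow> \<not> (\<exists>r. q = p @ r) \<and> \<not> (\<exists>r. p = q @ r)"

definition closed_fm :: "'a fm \<Rightarrow> bool" where
  "closed_fm F \<longleftrightarrow> (\<exists>B p q. occ F p True B \<and> occ F q False B \<and> nonoverlap p q)"

text \<open>rule G Xs: one reduction rule applies to G, producing one child
  G \<or> \<sim>X for each X in Xs (in order).\<close>
inductive rule :: "'a fm \<Rightarrow> 'a fm list \<Rightarrow> bool" where
  disj: "occ G p False (Or B C) \<Longrightarrow> rule G [B, C]"
| eps1: "occ G p False (Eps a b) \<Longrightarrow> rule G [Eps a a]"
| eps2: "occ G p False (Eps a b) \<Longrightarrow> occ G q False (Eps b c) \<Longrightarrow> nonoverlap p q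
         \<Longrightarrow> rule G [Eps a c]"
| eps3b: "occ G p False (Eps a b) \<Longrightarrow> occ G q False (Eps b b) \<Longrightarrow> nonoverlap p q
         \<Longrightarrow> rule G [Eps b a]"

definition normal_app :: "'a fm \<Rightarrow> 'a fm list \<Rightarrow> bool" where
  "normal_app G Xs \<longleftrightarrow> rule G Xs \<and> \<not> closed_fm G \<and> (\<forall>X\<in>set Xs. \<not> neg_part G X)"

datatype 'a tab = Nd "'a fm" "'a tab list"

fun root :: "'a tab \<Rightarrow> 'a fm" where
  "root (Nd G ts) = G"

fun is_tab :: "'a tab \<Rightarrow> bool" where
  "is_tab (Nd G ts) = (ts = [] \<or>
     ((\<exists>Xs. rule G Xs \<and> list_all2 (\<lambda>t X. root t = Or G (Neg X)) ts Xs)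
      \<and> (\<forall>t\<in>set ts. is_tab t)))"

fun is_normal_tab :: "'a tab \<Rightarrow> bool" where
  "is_normal_tab (Nd G ts) = (ts = [] \<or>
     ((\<exists>Xs. normal_app G Xs \<and> list_all2 (\<lambda>t X. root t = Or G (Neg X)) ts Xs)
      \<and> (\<forall>t\<in>set ts. is_normal_tab t)))"

fun leaves :: "'a tab \<Rightarrow> 'a fm set" where
  "leaves (Nd G ts) = (if ts = [] then {G} else \<Union> (leaves ` set ts))"

definition tableau_for :: "'a fm \<Rightarrow> 'a tab \<Rightarrow> bool" where
  "tableau_for A T \<longleftrightarrow> root T = A \<and> is_tab T"

definition normal_tableau_for :: "'a fm \<Rightarrow> 'a tab \<Rightarrow> bool" where
  "normal_tableau_for A T \<longleftrightarrow> tableau_for A T \<and> is_normal_tab T"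

definition closed_tab :: "'a tab \<Rightarrow> bool" where
  "closed_tab T \<longleftrightarrow> (\<forall>L\<in>leaves T. closed_fm L)"

definition completed :: "'a tab \<Rightarrow> bool" where
  "completed T \<longleftrightarrow> is_normal_tab T \<and> (\<forall>L\<in>leaves T. \<not> (\<exists>Xs. normal_app L Xs))"

definition hintikka :: "'a fm \<Rightarrow> bool" where
  "hintikka H \<longleftrightarrow>
     \<not> closed_fm H
   \<and> (\<forall>B C. neg_part H (Or B C) \<longrightarrow> neg_part H B \<or> neg_part H C)
   \<and> (\<forall>a b. neg_part H (Eps a b) \<longrightarrow> neg_part H (Eps a a))
   \<and> (\<forall>a b c. neg_part H (Eps a b) \<and> neg_part H (Eps b c) \<longrightarrow> neg_part H (Eps a c))
   \<and> (\<forall>a b. neg_part H (Eps a b) \<and> neg_part H (Eps b b) \<longrightarrow> neg_part H (Eps b a))"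

end

theory Submission
  imports Defs
begin

text \<open>Read \<open>\<epsilon>ab\<close> as a binary relation \<open>v\<close> on names and call \<open>v\<close> admissible if it
  satisfies the three closure conditions behind the rules \<open>\<epsilon>\<^sub>1\<close>, \<open>\<epsilon>\<^sub>2\<close>, \<open>\<epsilon>\<^sub>3\<^sub>b\<close>.
  Every rule is sound: if \<open>v\<close> falsifies the reduced formula \<open>G\<close>, each negative
  part of \<open>G\<close> is true, so some appended \<open>X\<close> is true and \<open>v\<close> falsifies the child
  \<open>G \<or> \<sim>X\<close>.  Hence a closed tableau proves its root valid for all admissible \<open>v\<close>.
  Conversely a Hintikka formula \<open>H\<close> is falsified by the admissible relation
  "\<open>\<epsilon>ab\<close> is a negative part of \<open>H\<close>", and a falsified leaf falsifies the root.
  A leaf of a completed tableau that is not closed is Hintikka.\<close>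

fun eval :: "('a \<Rightarrow> 'a \<Rightarrow> bool) \<Rightarrow> 'a fm \<Rightarrow> bool" where
  "eval v (Eps a b) = v a b"
| "eval v (Or B C) = (eval v B \<or> eval v C)"
| "eval v (Neg B) = (\<not> eval v B)"

definition admissible :: "('a \<Rightarrow> 'a \<Rightarrow> bool) \<Rightarrow> bool" where
  "admissible v \<longleftrightarrow> (\<forall>a b. v a b \<longrightarrow> v a a) \<and> (\<forall>a b c. v a b \<and> v b c \<longrightarrow> v a c)
     \<and> (\<forall>a b. v a b \<and> v b b \<longrightarrow> v b a)"

definition valid :: "'a fm \<Rightarrow> bool" where
  "valid A \<longleftrightarrow> (\<forall>v. admissible v \<longrightarrow> eval v A)"

definition hintikka_model :: "'a fm \<Rightarrow> 'a \<Rightarrow> 'a \<Rightarrow> bool" where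
  "hintikka_model H a b \<longleftrightarrow> neg_part H (Eps a b)"

lemma occ_eval_if_not_eval: "occ A p pol B \<Longrightarrow> \<not> eval v A \<Longrightarrow> eval v B \<longleftrightarrow> \<not> pol"
  by (induction rule: occ.induct) auto

lemma occ_Nil: "occ A [] pol B \<Longrightarrow> pol \<and> B = A"
  by (erule occ.cases) auto

lemma occ_snoc_cases:
  "occ A (p @ [x]) pol B \<Longrightarrow>
     (x = 0 \<and> pol \<and> (\<exists>C. occ A p True (Or B C)))
   \<or> (x = 1 \<and> pol \<and> (\<exists>C. occ A p True (Or C B)))
   \<or> (x = 2 \<and> occ A p (\<not> pol) (Neg B))"
  by (erule occ.cases) auto

lemma occ_unique: "occ A p pol B \<Longrightarrow> occ A p pol' B' \<Longrightarrow> pol = pol' \<and> B = B'"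
proof (induction p arbitrary: pol B pol' B' rule: rev_induct)
  case Nil
  then show ?case using occ_Nil by blast
next
  case (snoc x p)
  from occ_snoc_cases[OF snoc.prems(1)] occ_snoc_cases[OF snoc.prems(2)] snoc.IH show ?case
    by (elim disjE conjE exE; (drule (1) snoc.IH)?; auto)
qed

lemma occ_proper_prefix_not_Eps:
  "occ A (p @ r) pol B \<Longrightarrow> r \<noteq> [] \<Longrightarrow> \<exists>pol' B'. occ A p pol' B' \<and> (\<forall>a b. B' \<noteq> Eps a b)"
proof (induction r arbitrary: pol B rule: rev_induct)
  case Nil
  then show ?case by simp
next
  case (snoc x r)
  from occ_snoc_cases[of A "p @ r" x pol B] snoc.prems
  obtain pol' B' where B': "occ A (p @ r) pol' B'" "\<forall>a b. B' \<noteq> Eps a b" by auto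
  show ?case
  proof (cases "r = []")
    case True
    then show ?thesis using B' by auto
  next
    case False
    then show ?thesis using snoc.IH B' by blast
  qed
qed

lemma occ_Eps_nonoverlap:
  assumes p: "occ H p pol (Eps a b)" and q: "occ H q pol' (Eps c d)"
  shows "(pol = pol' \<and> a = c \<and> b = d) \<or> nonoverlap p q"
proof (cases "p = q")
  case True
  then show ?thesis using occ_unique[OF p] q by auto
next
  case False
  have no_prefix: "\<not> (\<exists>r. q' = p' @ r)"
    if p': "occ H p' pl (Eps a' b')" and q': "occ H q' pl' (Eps c' d')" and "p' \<noteq> q'"
    for p' q' pl pl' a' b' c' d'
  proof
    assume "\<exists>r. q' = p' @ r"
    then obtain r where "q' = p' @ r" "r \<noteq> []" using \<open>p' \<noteq> q'\<close> by auto
    with occ_proper_prefix_not_Eps q' obtain pol'' B'' where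
      "occ H p' pol'' B''" "\<forall>a b. B'' \<noteq> Eps a b" by blast
    with occ_unique[OF p'] show False by blast
  qed
  show ?thesis
    using no_prefix[OF p q False] no_prefix[OF q p] False by (auto simp: nonoverlap_def)
qed

lemma closed_fm_eval: "closed_fm F \<Longrightarrow> eval v F"
  unfolding closed_fm_def using occ_eval_if_not_eval by blast

lemma list_all2_set1_bex: "list_all2 P xs ys \<Longrightarrow> x \<in> set xs \<Longrightarrow> \<exists>y\<in>set ys. P x y"
  by (induction xs ys rule: list_all2_induct) auto

lemma list_all2_set2_bex: "list_all2 P xs ys \<Longrightarrow> y \<in> set ys \<Longrightarrow> \<exists>x\<in>set xs. P x y"
  by (induction xs ys rule: list_all2_induct) auto

lemma rule_sound:
  assumes "rule G Xs" "admissible v" "\<not> eval v G"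
  shows "\<exists>X\<in>set Xs. eval v X"
  using assms
proof (induction rule: rule.induct)
  case (disj G p B C)
  then show ?case using occ_eval_if_not_eval[OF disj(1)] by auto
next
  case (eps1 G p a b)
  have "v a b" using occ_eval_if_not_eval[OF eps1(1) eps1(3)] by simp
  then have "v a a" using eps1(2) unfolding admissible_def by blast
  then show ?case by simp
next
  case (eps2 G p a b q c)
  have "v a b" "v b c"
    using occ_eval_if_not_eval[OF eps2(1) eps2(5)] occ_eval_if_not_eval[OF eps2(2) eps2(5)]
    by simp_all
  then have "v a c" using eps2(4) unfolding admissible_def by blast
  then show ?case by simp
next
  case (eps3b G p a b q)
  have "v a b" "v b b"
    using occ_eval_if_not_eval[OF eps3b(1) eps3b(5)] occ_eval_if_not_eval[OF eps3b(2) eps3b(5)]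
    by simp_all
  then have "v b a" using eps3b(4) unfolding admissible_def by blast
  then show ?case by simp
qed

lemma is_tab_closed_eval_root:
  "is_tab T \<Longrightarrow> \<forall>L\<in>leaves T. closed_fm L \<Longrightarrow> admissible v \<Longrightarrow> eval v (root T)"
proof (induction T)
  case (Nd G ts)
  show ?case
  proof (cases "ts = []")
    case True
    then show ?thesis using Nd.prems closed_fm_eval by auto
  next
    case False
    with Nd.prems obtain Xs where Xs: "rule G Xs"
      and children: "list_all2 (\<lambda>t X. root t = Or G (Neg X)) ts Xs"
      and tabs: "\<forall>t\<in>set ts. is_tab t" by auto
    have children_true: "\<forall>t\<in>set ts. eval v (root t)"
      using Nd.IH tabs Nd.prems False by auto
    show ?thesis
    proof (rule ccontr)
      assume "\<not> eval v (root (Nd G ts))"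
      then have "\<not> eval v G" by simp
      with rule_sound[OF Xs Nd.prems(3)] obtain X where "X \<in> set Xs" "eval v X" by blast
      with list_all2_set2_bex[OF children] obtain t where "t \<in> set ts" "root t = Or G (Neg X)"
        by blast
      with children_true \<open>\<not> eval v G\<close> \<open>eval v X\<close> show False by auto
    qed
  qed
qed

lemma closed_tab_valid_root: "is_tab T \<Longrightarrow> closed_tab T \<Longrightarrow> valid (root T)"
  by (simp add: closed_tab_def valid_def is_tab_closed_eval_root)

lemma hintikka_model_eval:
  assumes H: "hintikka H"
  shows "(pos_part H X \<longrightarrow> \<not> eval (hintikka_model H) X)
       \<and> (neg_part H X \<longrightarrow> eval (hintikka_model H) X)"
proof (induction X)
  case (Eps a b)
  have "\<not> (pos_part H (Eps a b) \<and> neg_part H (Eps a b))"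
  proof
    assume "pos_part H (Eps a b) \<and> neg_part H (Eps a b)"
    then obtain p q where p: "occ H p True (Eps a b)" and q: "occ H q False (Eps a b)"
      unfolding pos_part_def neg_part_def by blast
    from occ_Eps_nonoverlap[OF p q] have "nonoverlap p q" by simp
    with p q H show False
      unfolding hintikka_def closed_fm_def by blast
  qed
  then show ?case by (auto simp: hintikka_model_def)
next
  case (Or B C)
  have "pos_part H (Or B C) \<Longrightarrow> pos_part H B \<and> pos_part H C"
    unfolding pos_part_def using occ.disjL occ.disjR by blast
  moreover have "neg_part H (Or B C) \<Longrightarrow> neg_part H B \<or> neg_part H C"
    using H unfolding hintikka_def by blast
  ultimately show ?case using Or by auto
next
  case (Neg B)
  have "pos_part H (Neg B) \<Longrightarrow> neg_part H B" "neg_part H (Neg B) \<Longrightarrow> pos_part H B"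
    unfolding pos_part_def neg_part_def using occ.negP occ.negN by blast+
  then show ?case using Neg by auto
qed

lemma hintikka_model_admissible: "hintikka H \<Longrightarrow> admissible (hintikka_model H)"
  unfolding hintikka_def admissible_def hintikka_model_def by blast

lemma hintikka_not_eval: "hintikka H \<Longrightarrow> \<not> eval (hintikka_model H) H"
  using hintikka_model_eval[of H H] occ.top[of H] unfolding pos_part_def by blast

lemma not_eval_leaf_root:
  "is_tab T \<Longrightarrow> L \<in> leaves T \<Longrightarrow> \<not> eval v L \<Longrightarrow> \<not> eval v (root T)"
proof (induction T)
  case (Nd G ts)
  show ?case
  proof (cases "ts = []")
    case True
    then show ?thesis using Nd.prems by auto
  next
    case False
    with Nd.prems obtain Xs where children: "list_all2 (\<lambda>t X. root t = Or G (Neg X)) ts Xs"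
      and tabs: "\<forall>t\<in>set ts. is_tab t" by auto
    from False Nd.prems obtain t where t: "t \<in> set ts" "L \<in> leaves t" by auto
    with Nd.IH tabs Nd.prems have "\<not> eval v (root t)" by auto
    moreover from list_all2_set1_bex[OF children t(1)] obtain X where "root t = Or G (Neg X)"
      by blast
    ultimately show ?thesis by simp
  qed
qed

lemma hintikka_leaf_not_valid_root:
  "is_tab T \<Longrightarrow> L \<in> leaves T \<Longrightarrow> hintikka L \<Longrightarrow> \<not> valid (root T)"
  unfolding valid_def
  using not_eval_leaf_root hintikka_not_eval hintikka_model_admissible by blast

lemma irreducible_hintikka:
  assumes open_L: "\<not> closed_fm L" and irreducible: "\<not> (\<exists>Xs. normal_app L Xs)"
  shows "hintikka L"
proof -
  have appended_neg: "rule L Xs \<Longrightarrow> \<exists>X\<in>set Xs. neg_part L X" for Xs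
    using irreducible open_L unfolding normal_app_def by blast
  have trans: "neg_part L (Eps a c)" if "neg_part L (Eps a b)" "neg_part L (Eps b c)" for a b c
  proof -
    from that obtain p q where p: "occ L p False (Eps a b)" and q: "occ L q False (Eps b c)"
      unfolding neg_part_def by blast
    from occ_Eps_nonoverlap[OF p q] show ?thesis
    proof
      assume "nonoverlap p q"
      from appended_neg[OF rule.eps2[OF p q this]] show ?thesis by simp
    qed (use that in simp)
  qed
  have sym: "neg_part L (Eps b a)" if "neg_part L (Eps a b)" "neg_part L (Eps b b)" for a b
  proof -
    from that obtain p q where p: "occ L p False (Eps a b)" and q: "occ L q False (Eps b b)"
      unfolding neg_part_def by blast
    from occ_Eps_nonoverlap[OF p q] show ?thesis
    proof
      assume "nonoverlap p q"
      from appended_neg[OF rule.eps3b[OF p q this]] show ?thesis by simp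
    qed (use that in simp)
  qed
  have "neg_part L B \<or> neg_part L C" if "neg_part L (Or B C)" for B C
    using that appended_neg[OF rule.disj] unfolding neg_part_def by force
  moreover have "neg_part L (Eps a a)" if "neg_part L (Eps a b)" for a b
    using that appended_neg[OF rule.eps1] unfolding neg_part_def by force
  ultimately show ?thesis
    unfolding hintikka_def using open_L trans sym by blast
qed

theorem theorem6p6:
  fixes A :: "'a fm"
  assumes "\<exists>T. normal_tableau_for A T \<and> closed_tab T"
  shows "(\<forall>T. normal_tableau_for A T \<longrightarrow> (\<forall>L\<in>leaves T. \<not> hintikka L))
       \<and> (\<forall>T. normal_tableau_for A T \<and> completed T \<longrightarrow> closed_tab T)"
proof -
  have tab: "is_tab T \<and> root T = A" if "normal_tableau_for A T" for T
    using that by (simp add: normal_tableau_for_def tableau_for_def)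
  from assms obtain T0 where "normal_tableau_for A T0" "closed_tab T0" by blast
  then have "valid A"
    using tab closed_tab_valid_root by metis
  then have no_hintikka: "\<forall>T. normal_tableau_for A T \<longrightarrow> (\<forall>L\<in>leaves T. \<not> hintikka L)"
    using tab hintikka_leaf_not_valid_root by metis
  moreover have "closed_tab T" if "normal_tableau_for A T" "completed T" for T
    unfolding closed_tab_def
  proof (intro ballI)
    fix L assume "L \<in> leaves T"
    with that have "\<not> hintikka L" "\<not> (\<exists>Xs. normal_app L Xs)"
      using no_hintikka by (auto simp: completed_def)
    then show "closed_fm L" using irreducible_hintikka by blast
  qed
  ultimately show ?thesis by blast
qed

end
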